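(* Let $\mathcal{H}=(\mathcal{V},\mathcal{E},\mu,\{w_e\})$ be a submodular hypergraph with $\mathcal{V}=[N]$, and let $\mathcal{G}$ be a directed graph with vertex set $\mathcal{V}_\mathcal{G}=\mathcal{V}\cup\bar{\mathcal{V}}$, where $\bar{\mathcal{V}}$ is a set of $M$ auxiliary vertices disjoint from $\mathcal{V}$, and nonnegative weighted adjacency matrix $\mathbf{A}$. Then the following two statements are equivalent: (i) $\mathrm{cut}_{\mathcal{H}}(\mathcal{S})=\min_{\mathcal{T}\subseteq\bar{\mathcal{V}}}\mathrm{cut}_{\mathcal{G}}(\mathcal{S}\cup\mathcal{T})$ for all $\mathcal{S}\subseteq\mathcal{V}$; (ii) $Q_1(\mathbf{x})=\min_{\bar{\mathbf{x}}\in\mathbb{R}^M}Q_1^{(g)}(\mathbf{y})$ for all $\mathbf{x}\in\mathbb{R}^N$, where $\mathbf{y}\in\mathbb{R}^{N+M}$ has $\mathbf{y}_{\mathcal{V}}=\mathbf{x}$ and $\mathbf{y}_{\bar{\mathcal{V}}}=\bar{\mathbf{x}}$.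
   Context: Lovász extension: for a set function $F:2^{[n]}\to\mathbb{R}$ with $F(\emptyset)=0$, and $\mathbf{x}\in\mathbb{R}^n$ with entries sorted as $x_{i_1}\ge\cdots\ge x_{i_n}$, $f(\mathbf{x})=\sum_{j=1}^{n-1}F(\{i_1,\dots,i_j\})(x_{i_j}-x_{i_{j+1}})+F([n])x_{i_n}$. A submodular hypergraph $\mathcal{H}=(\mathcal{V},\mathcal{E},\mu,\{w_e\})$ has vertex set $\mathcal{V}=[N]$, a set $\mathcal{E}$ of hyperedges $e\subseteq\mathcal{V}$, positive vertex weights $\mu$, and for each $e$ a splitting function $w_e:2^e\to\mathbb{R}_{\ge0}$ that is submodular, symmetric ($w_e(\mathcal{S})=w_e(e\setminus\mathcal{S})$) and satisfies $w_e(\emptyset)=0$; it is extended to $2^{\mathcal{V}}$ by $w_e(\mathcal{S})=w_e(\mathcal{S}\cap e)$. The hypergraph cut function is $\mathrm{cut}_{\mathcal{H}}(\mathcal{S})=\sum_{e\in\mathcal{E}}w_e(\mathcal{S})$, and $Q_1:\mathbb{R}^N\to\mathbb{R}$ is its Lovász extension (equivalently $Q_1(\mathbf{x})=\sum_{e}\vartheta_e f_e(\mathbf{x})$ with $\vartheta_e=\max_{\mathcal{S}\subseteq e}w_e(\mathcal{S})$ and $f_e$ the Lovász extension of $\vartheta_e^{-1}w_e$). For a directed graph with vertex set $\mathcal{V}_\mathcal{G}$ and nonnegative adjacency matrix $\mathbf{A}$ ($A_{uv}$ = weight of edge $u\to v$), $\mathrm{cut}_\mathcal{G}(\mathcal{S})=\sum_{u\in\mathcal{S},v\in\mathcal{V}_\mathcal{G}\setminus\mathcal{S}}A_{uv}$,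 and its Lovász extension is $Q_1^{(g)}(\mathbf{y})=\sum_{u,v\in\mathcal{V}_\mathcal{G}}A_{uv}\max\{y_u-y_v,0\}$. *)

theory Defs
  imports Main "HOL-Library.Library"
begin

text \<open>Ground sets are initial segments {..<n} of nat (0-indexed version of [n]).
  A decreasing sorting permutation of x on {..<n}.\<close>
definition sorting_perm :: "nat \<Rightarrow> (nat \<Rightarrow> real) \<Rightarrow> (nat \<Rightarrow> nat) \<Rightarrow> bool" where
  "sorting_perm n x \<sigma> \<longleftrightarrow> bij_betw \<sigma> {..<n} {..<n} \<and>
     (\<forall>i j. i < j \<and> j < n \<longrightarrow> x (\<sigma> j) \<le> x (\<sigma> i))"

definition lovasz_ext :: "nat \<Rightarrow> (nat set \<Rightarrow> real) \<Rightarrow> (nat \<Rightarrow> real) \<Rightarrow> real" where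
  "lovasz_ext n F x = (let \<sigma> = (SOME \<sigma>. sorting_perm n x \<sigma>) in
     (\<Sum>j<n - 1. F (\<sigma> ` {..j}) * (x (\<sigma> j) - x (\<sigma> (Suc j))))
     + F {..<n} * x (\<sigma> (n - 1)))"

definition submodular_on :: "nat set \<Rightarrow> (nat set \<Rightarrow> real) \<Rightarrow> bool" where
  "submodular_on e F \<longleftrightarrow> (\<forall>S T. S \<subseteq> e \<longrightarrow> T \<subseteq> e \<longrightarrow> F (S \<union> T) + F (S \<inter> T) \<le> F S + F T)"

definition submodular_hypergraph ::
  "nat \<Rightarrow> nat set set \<Rightarrow> (nat \<Rightarrow> real) \<Rightarrow> (nat set \<Rightarrow> nat set \<Rightarrow> real) \<Rightarrow> bool" where
  "submodular_hypergraph N E mu w \<longleftrightarrow>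
     (\<forall>e\<in>E. e \<subseteq> {..<N}) \<and> (\<forall>v<N. mu v > 0) \<and>
     (\<forall>e\<in>E. (\<forall>S\<subseteq>e. w e S \<ge> 0) \<and> submodular_on e (w e) \<and>
             (\<forall>S\<subseteq>e. w e S = w e (e - S)) \<and> w e {} = 0)"

text \<open>w_e extended to 2^V by w_e(S) = w_e(S \<inter> e).\<close>
definition hcut :: "nat set set \<Rightarrow> (nat set \<Rightarrow> nat set \<Rightarrow> real) \<Rightarrow> nat set \<Rightarrow> real" where
  "hcut E w S = (\<Sum>e\<in>E. w e (S \<inter> e))"

definition hQ1 :: "nat \<Rightarrow> nat set set \<Rightarrow> (nat set \<Rightarrow> nat set \<Rightarrow> real) \<Rightarrow> (nat \<Rightarrow> real) \<Rightarrow> real" where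
  "hQ1 N E w x = lovasz_ext N (hcut E w) x"

definition gcut :: "nat set \<Rightarrow> (nat \<Rightarrow> nat \<Rightarrow> real) \<Rightarrow> nat set \<Rightarrow> real" where
  "gcut VG A S = (\<Sum>u\<in>S. \<Sum>v\<in>VG - S. A u v)"

definition gQ1 :: "nat set \<Rightarrow> (nat \<Rightarrow> nat \<Rightarrow> real) \<Rightarrow> (nat \<Rightarrow> real) \<Rightarrow> real" where
  "gQ1 VG A y = (\<Sum>u\<in>VG. \<Sum>v\<in>VG. A u v * max (y u - y v) 0)"

end

theory Submission
  imports Defs
begin

text \<open>Both Lovasz extensions have the level-set form
  \<open>f(x) = \<Sum>\<^sub>t t (F{x \<ge> t} - F{x > t})\<close>; for the graph this is the layer-cake formula for
  \<open>\<Sum> A\<^sub>u\<^sub>v max(y\<^sub>u - y\<^sub>v, 0)\<close>. Given (i), every upper level set of an extension \<open>y\<close> of \<open>x\<close> meets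
  \<open>V\<close> in a level set \<open>S\<close> of \<open>x\<close> and has cut at least \<open>F(S)\<close>, so \<open>Q\<^sub>1(x) \<le> Q\<^sub>1\<^sup>g(y)\<close> by monotonicity of
  the chain form; equality is reached by realising the optimal cuts of the level sets of \<open>x\<close> as
  level sets of \<open>y\<close>, which is possible because submodularity of the graph cut makes the least
  optimal auxiliary sets nested. Given (ii), take \<open>x = 1\<^sub>S\<close>: extensions by indicators show that
  \<open>F(S)\<close> is a lower bound for the cuts, and the optimal extension is a convex combination of cuts
  of sets meeting \<open>V\<close> in \<open>S\<close>, one of which is therefore at most \<open>F(S)\<close>.\<close>

section \<open>Level-set form of the Lovasz extension\<close>

definition lovasz_levels :: "nat set \<Rightarrow> (nat set \<Rightarrow> real) \<Rightarrow> (nat \<Rightarrow> real) \<Rightarrow> real" where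
  "lovasz_levels U F y = (\<Sum>t\<in>y ` U. t * (F {u\<in>U. t \<le> y u} - F {u\<in>U. t < y u}))"

lemma lovasz_levels_superset:
  assumes "finite Y" "y ` U \<subseteq> Y"
  shows "lovasz_levels U F y = (\<Sum>t\<in>Y. t * (F {u\<in>U. t \<le> y u} - F {u\<in>U. t < y u}))"
  unfolding lovasz_levels_def
proof (rule sum.mono_neutral_left[OF assms])
  show "\<forall>t\<in>Y - y ` U. t * (F {u\<in>U. t \<le> y u} - F {u\<in>U. t < y u}) = 0"
  proof
    fix t assume "t \<in> Y - y ` U"
    hence "{u\<in>U. t \<le> y u} = {u\<in>U. t < y u}" by force
    thus "t * (F {u\<in>U. t \<le> y u} - F {u\<in>U. t < y u}) = 0" by simp
  qed
qed

lemma lovasz_levels_cong: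
  assumes "\<And>u. u \<in> U \<Longrightarrow> y u = z u"
  shows "lovasz_levels U F y = lovasz_levels U F z"
proof -
  have "y ` U = z ` U" using assms by force
  moreover have "\<And>t. {u\<in>U. t \<le> y u} = {u\<in>U. t \<le> z u}" "\<And>t. {u\<in>U. t < y u} = {u\<in>U. t < z u}"
    using assms by auto
  ultimately show ?thesis unfolding lovasz_levels_def by simp
qed

lemma lovasz_levels_restrict:
  assumes "finite W" "U \<subseteq> W"
  shows "lovasz_levels W (\<lambda>S. F (S \<inter> U)) y = lovasz_levels U F y"
proof -
  have "{u\<in>W. t \<le> y u} \<inter> U = {u\<in>U. t \<le> y u}" "{u\<in>W. t < y u} \<inter> U = {u\<in>U. t < y u}" for t
    using assms(2) by auto
  hence "lovasz_levels W (\<lambda>S. F (S \<inter> U)) y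
      = (\<Sum>t\<in>y ` W. t * (F {u\<in>U. t \<le> y u} - F {u\<in>U. t < y u}))"
    unfolding lovasz_levels_def by simp
  also have "\<dots> = lovasz_levels U F y"
    using assms by (intro lovasz_levels_superset[symmetric]) auto
  finally show ?thesis .
qed

lemma lovasz_levels_remove_min:
  assumes "finite U" "m \<in> U" "\<And>u. u \<in> U \<Longrightarrow> y m \<le> y u"
  shows "lovasz_levels U F y = lovasz_levels (U - {m}) F y + y m * (F U - F (U - {m}))"
proof -
  let ?U' = "U - {m}"
  let ?term = "\<lambda>W t. t * (F {u\<in>W. t \<le> y u} - F {u\<in>W. t < y u})"
  have above: "?term U t = ?term ?U' t" if "y m < t" for t
  proof -
    have "{u\<in>U. t \<le> y u} = {u\<in>?U'. t \<le> y u}" "{u\<in>U. t < y u} = {u\<in>?U'. t < y u}"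
      using that by auto
    thus ?thesis by simp
  qed
  have all: "{u\<in>U. y m \<le> y u} = U" using assms by auto
  have gtm: "{u\<in>U. y m < y u} = {u\<in>?U'. y m < y u}" by auto
  show ?thesis
  proof (cases "y m \<in> y ` ?U'")
    case True
    have im: "y ` U = y ` ?U'" using True assms(2) by blast
    have all': "{u\<in>?U'. y m \<le> y u} = ?U'" using assms by auto
    have "lovasz_levels U F y = y m * (F U - F {u\<in>U. y m < y u}) + (\<Sum>t\<in>y ` ?U' - {y m}. ?term U t)"
      unfolding lovasz_levels_def im using assms(1) True
      by (subst sum.remove[of _ "y m"]) (simp_all only: all finite_imageI finite_Diff)
    moreover have "lovasz_levels ?U' F y
        = y m * (F ?U' - F {u\<in>?U'. y m < y u}) + (\<Sum>t\<in>y ` ?U' - {y m}. ?term ?U' t)"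
      unfolding lovasz_levels_def using assms(1) True
      by (subst sum.remove[of _ "y m"]) (simp_all only: all' finite_imageI finite_Diff)
    moreover have "(\<Sum>t\<in>y ` ?U' - {y m}. ?term U t) = (\<Sum>t\<in>y ` ?U' - {y m}. ?term ?U' t)"
      using assms(3) by (intro sum.cong refl above) force
    ultimately show ?thesis using gtm by (simp add: algebra_simps)
  next
    case False
    have im: "y ` U = insert (y m) (y ` ?U')" using assms(2) by blast
    have gtm': "{u\<in>U. y m < y u} = ?U'" using False assms(3) by (auto simp: order_le_less)
    have "lovasz_levels U F y = y m * (F U - F ?U') + (\<Sum>t\<in>y ` ?U'. ?term U t)"
      unfolding lovasz_levels_def im using assms(1) False by (simp add: all gtm')
    moreover have "(\<Sum>t\<in>y ` ?U'. ?term U t) = lovasz_levels ?U' F y"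
      unfolding lovasz_levels_def
      using assms(3) False by (intro sum.cong refl above) (metis Diff_iff imageE imageI order_le_less)
    ultimately show ?thesis by simp
  qed
qed

definition lovasz_chain :: "nat \<Rightarrow> nat set \<Rightarrow> (nat set \<Rightarrow> real) \<Rightarrow> (nat \<Rightarrow> real) \<Rightarrow> (nat \<Rightarrow> nat) \<Rightarrow> real" where
  "lovasz_chain n U F y \<sigma> =
     (\<Sum>j<n - 1. F (\<sigma> ` {..j}) * (y (\<sigma> j) - y (\<sigma> (Suc j)))) + F U * y (\<sigma> (n - 1))"

lemma lovasz_chain_eq_levels:
  assumes "bij_betw \<sigma> {..<n} U" "\<forall>i j. i < j \<and> j < n \<longrightarrow> y (\<sigma> j) \<le> y (\<sigma> i)" "F {} = 0"
  shows "lovasz_chain n U F y \<sigma> = lovasz_levels U F y"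
  using assms(1,2)
proof (induction n arbitrary: U)
  case 0
  hence "U = {}" by (simp add: bij_betw_def)
  thus ?case by (simp add: lovasz_chain_def lovasz_levels_def assms(3))
next
  case (Suc k)
  let ?m = "\<sigma> k" and ?U' = "U - {\<sigma> k}"
  have inj: "inj_on \<sigma> {..<Suc k}" and img: "\<sigma> ` {..<Suc k} = U"
    using Suc.prems(1) by (auto simp: bij_betw_def)
  have "\<sigma> ` ({..<Suc k} - {k}) = U - {?m}"
    using inj_on_image_set_diff[OF inj] img by auto
  hence img': "\<sigma> ` {..<k} = ?U'" by (simp add: lessThan_Suc)
  hence "bij_betw \<sigma> {..<k} ?U'"
    unfolding bij_betw_def using inj by (auto intro: inj_on_subset)
  hence IH: "lovasz_chain k ?U' F y \<sigma> = lovasz_levels ?U' F y"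
    using Suc.IH Suc.prems(2) by auto
  have "y ?m \<le> y u" if "u \<in> U" for u
  proof -
    obtain i where "i < Suc k" "u = \<sigma> i" using img \<open>u \<in> U\<close> by auto
    thus ?thesis using Suc.prems(2) by (cases "i = k") auto
  qed
  hence levels: "lovasz_levels U F y = lovasz_levels ?U' F y + y ?m * (F U - F ?U')"
    using img by (intro lovasz_levels_remove_min) auto
  have chain: "lovasz_chain (Suc k) U F y \<sigma> = lovasz_chain k ?U' F y \<sigma> + y ?m * (F U - F ?U')"
  proof (cases k)
    case 0
    hence "?U' = {}" using img' by auto
    thus ?thesis using 0 by (simp add: lovasz_chain_def assms(3) algebra_simps)
  next
    case (Suc k')
    have "\<sigma> ` {..k'} = ?U'" using img' Suc by (simp add: lessThan_Suc_atMost)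
    thus ?thesis using Suc by (simp add: lovasz_chain_def algebra_simps)
  qed
  show ?case using chain IH levels by simp
qed

lemma sorting_perm_exists: "\<exists>\<sigma>. sorting_perm n x \<sigma>"
proof -
  define xs where "xs = sort_key (\<lambda>i. - x i) [0..<n]"
  have len: "length xs = n" and "set xs = {..<n}" "distinct xs"
    by (auto simp: xs_def)
  hence bij: "bij_betw ((!) xs) {..<n} {..<n}" by (intro bij_betw_nth) auto
  have srt: "List.sorted (map (\<lambda>i. - x i) xs)" by (simp add: xs_def)
  have "x (xs ! j) \<le> x (xs ! i)" if "i < j" "j < n" for i j
    using srt len that unfolding List.sorted_iff_nth_mono by fastforce
  thus ?thesis using bij unfolding sorting_perm_def by blast
qed

lemma lovasz_ext_eq_levels:
  assumes "F {} = 0"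
  shows "lovasz_ext n F x = lovasz_levels {..<n} F x"
proof -
  define \<sigma> where "\<sigma> = (SOME \<sigma>. sorting_perm n x \<sigma>)"
  have "sorting_perm n x \<sigma>" unfolding \<sigma>_def using someI_ex[OF sorting_perm_exists] .
  hence "lovasz_chain n {..<n} F x \<sigma> = lovasz_levels {..<n} F x"
    using assms unfolding sorting_perm_def by (intro lovasz_chain_eq_levels) auto
  thus ?thesis unfolding lovasz_ext_def lovasz_chain_def \<sigma>_def Let_def by simp
qed

lemma lovasz_chain_mono:
  assumes "\<forall>i j. i < j \<and> j < n \<longrightarrow> y (\<sigma> j) \<le> y (\<sigma> i)"
    and "\<And>j. j < n - 1 \<Longrightarrow> F (\<sigma> ` {..j}) \<le> G (\<sigma> ` {..j})"
    and "F U = G U"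
  shows "lovasz_chain n U F y \<sigma> \<le> lovasz_chain n U G y \<sigma>"
proof -
  have "(\<Sum>j<n - 1. F (\<sigma> ` {..j}) * (y (\<sigma> j) - y (\<sigma> (Suc j))))
     \<le> (\<Sum>j<n - 1. G (\<sigma> ` {..j}) * (y (\<sigma> j) - y (\<sigma> (Suc j))))"
    using assms(1,2) by (intro sum_mono mult_right_mono) auto
  thus ?thesis unfolding lovasz_chain_def using assms(3) by simp
qed

lemma lovasz_levels_mono:
  assumes "\<And>C. C \<subseteq> {..<n} \<Longrightarrow> F C \<le> G C" "F {..<n} = G {..<n}" "F {} = 0" "G {} = 0"
  shows "lovasz_levels {..<n} F y \<le> lovasz_levels {..<n} G y"
proof -
  obtain \<sigma> where "sorting_perm n y \<sigma>" using sorting_perm_exists by blast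
  hence bij: "bij_betw \<sigma> {..<n} {..<n}" and srt: "\<forall>i j. i < j \<and> j < n \<longrightarrow> y (\<sigma> j) \<le> y (\<sigma> i)"
    unfolding sorting_perm_def by auto
  have "lovasz_levels {..<n} F y = lovasz_chain n {..<n} F y \<sigma>"
    using bij srt assms(3) by (rule lovasz_chain_eq_levels[symmetric])
  also have "\<dots> \<le> lovasz_chain n {..<n} G y \<sigma>"
  proof (rule lovasz_chain_mono)
    fix j assume "j < n - 1"
    hence "\<sigma> ` {..j} \<subseteq> {..<n}" using bij by (auto simp: bij_betw_def)
    thus "F (\<sigma> ` {..j}) \<le> G (\<sigma> ` {..j})" by (rule assms(1))
  qed (use srt assms(2) in auto)
  also have "\<dots> = lovasz_levels {..<n} G y"
    using bij srt assms(4) by (rule lovasz_chain_eq_levels)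
  finally show ?thesis .
qed

lemma lovasz_levels_indicator:
  assumes "finite U" "S \<subseteq> U" "F {} = 0"
  shows "lovasz_levels U F (\<lambda>i. if i \<in> S then 1 else 0) = F S"
proof -
  let ?x = "\<lambda>i. if i \<in> S then 1 else (0::real)"
  have "lovasz_levels U F ?x = (\<Sum>t\<in>{0,1}. t * (F {u\<in>U. t \<le> ?x u} - F {u\<in>U. t < ?x u}))"
    by (rule lovasz_levels_superset) auto
  also have "\<dots> = F {u\<in>U. 1 \<le> ?x u} - F {u\<in>U. 1 < ?x u}"
    by simp
  also have "{u\<in>U. 1 \<le> ?x u} = S" using assms(2) by auto
  also have "{u\<in>U. 1 < ?x u} = {}" by auto
  finally show ?thesis using assms(3) by simp
qed

text \<open>Level sets at thresholds outside the common value set \<open>X\<close> reduce to those at the next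
  value of \<open>X\<close> upwards, so comparing the level sets at the points of \<open>X\<close> suffices.\<close>
lemma lovasz_levels_eqI:
  assumes X: "finite X" "y ` U \<subseteq> X" "x ` V \<subseteq> X" and empty: "G {} = F {}"
    and levels: "\<And>t. t \<in> X \<Longrightarrow> G {u\<in>U. t \<le> y u} = F {v\<in>V. t \<le> x v}"
  shows "lovasz_levels U G y = lovasz_levels V F x"
proof -
  have ge: "G {u\<in>U. s \<le> y u} = F {v\<in>V. s \<le> x v}" for s
  proof (cases "\<exists>t\<in>X. s \<le> t")
    case True
    define t0 where "t0 = Min {t\<in>X. s \<le> t}"
    have "t0 \<in> {t\<in>X. s \<le> t}" unfolding t0_def using X(1) True by (intro Min_in) auto
    hence "t0 \<in> X" "s \<le> t0" by auto
    moreover have "t0 \<le> t" if "t \<in> X" "s \<le> t" for t using X(1) that by (simp add: t0_def)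
    ultimately have "{u\<in>U. s \<le> y u} = {u\<in>U. t0 \<le> y u}" "{v\<in>V. s \<le> x v} = {v\<in>V. t0 \<le> x v}"
      using X(2,3) by (auto intro: order_trans)
    thus ?thesis using levels \<open>t0 \<in> X\<close> by simp
  next
    case False
    hence "{u\<in>U. s \<le> y u} = {}" "{v\<in>V. s \<le> x v} = {}" using X(2,3) by fastforce+
    thus ?thesis using empty by metis
  qed
  have gt: "G {u\<in>U. s < y u} = F {v\<in>V. s < x v}" for s
  proof -
    obtain s' where s': "\<forall>t\<in>X. s < t \<longleftrightarrow> s' \<le> t"
    proof (cases "\<exists>t\<in>X. s < t")
      case True
      define s' where "s' = Min {t\<in>X. s < t}"
      have "s' \<in> {t\<in>X. s < t}" unfolding s'_def using X(1) True by (intro Min_in) auto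
      moreover have "s' \<le> t" if "t \<in> X" "s < t" for t using X(1) that by (simp add: s'_def)
      ultimately show ?thesis using that[of s'] by force
    next
      case False
      thus ?thesis using that[of "s + 1"] by force
    qed
    hence "{u\<in>U. s < y u} = {u\<in>U. s' \<le> y u}" "{v\<in>V. s < x v} = {v\<in>V. s' \<le> x v}"
      using X(2,3) by blast+
    thus ?thesis using ge by simp
  qed
  have "lovasz_levels U G y = (\<Sum>t\<in>X. t * (G {u\<in>U. t \<le> y u} - G {u\<in>U. t < y u}))"
    using X(1,2) by (rule lovasz_levels_superset)
  also have "\<dots> = (\<Sum>t\<in>X. t * (F {v\<in>V. t \<le> x v} - F {v\<in>V. t < x v}))"
    using ge gt by simp
  also have "\<dots> = lovasz_levels V F x"
    using X(1,3) by (rule lovasz_levels_superset[symmetric])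
  finally show ?thesis .
qed

lemma gcut_empty: "gcut VG A {} = 0"
  by (simp add: gcut_def)

lemma gcut_all: "gcut VG A VG = 0"
  by (simp add: gcut_def)

lemma gcut_nonneg:
  assumes "S \<subseteq> VG" "\<forall>u\<in>VG. \<forall>v\<in>VG. A u v \<ge> 0"
  shows "gcut VG A S \<ge> 0"
  unfolding gcut_def using assms by (intro sum_nonneg) auto

lemma gcut_eq_sum_indicator:
  assumes "finite VG" "S \<subseteq> VG"
  shows "gcut VG A S = (\<Sum>u\<in>VG. \<Sum>v\<in>VG. A u v * (if u \<in> S \<and> v \<notin> S then 1 else 0))"
proof -
  have "gcut VG A S = (\<Sum>u\<in>VG \<inter> S. \<Sum>v\<in>VG \<inter> - S. A u v)"
    unfolding gcut_def using assms(2) by (simp add: Int_absorb1 Diff_eq)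
  also have "\<dots> = (\<Sum>u\<in>VG. if u \<in> S then (\<Sum>v\<in>VG. if v \<in> - S then A u v else 0) else 0)"
    using assms(1) by (simp only: sum.inter_restrict)
  also have "\<dots> = (\<Sum>u\<in>VG. \<Sum>v\<in>VG. A u v * (if u \<in> S \<and> v \<notin> S then 1 else 0))"
    by (intro sum.cong refl) (auto intro: sum.cong)
  finally show ?thesis .
qed

lemma gcut_submodular:
  assumes "finite VG" "\<forall>u\<in>VG. \<forall>v\<in>VG. A u v \<ge> 0"
  shows "submodular_on VG (gcut VG A)"
  unfolding submodular_on_def
proof (intro allI impI)
  fix X Y assume XY: "X \<subseteq> VG" "Y \<subseteq> VG"
  hence "X \<union> Y \<subseteq> VG" "X \<inter> Y \<subseteq> VG" by auto
  let ?ind = "\<lambda>S u v. if u \<in> S \<and> v \<notin> S then 1 else (0::real)"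
  have "gcut VG A (X \<union> Y) + gcut VG A (X \<inter> Y)
      = (\<Sum>u\<in>VG. \<Sum>v\<in>VG. A u v * (?ind (X \<union> Y) u v + ?ind (X \<inter> Y) u v))"
    using assms(1) \<open>X \<union> Y \<subseteq> VG\<close> \<open>X \<inter> Y \<subseteq> VG\<close>
    by (simp only: gcut_eq_sum_indicator sum.distrib[symmetric] distrib_left)
  also have "\<dots> \<le> (\<Sum>u\<in>VG. \<Sum>v\<in>VG. A u v * (?ind X u v + ?ind Y u v))"
    using assms(2) by (intro sum_mono mult_left_mono) auto
  also have "\<dots> = gcut VG A X + gcut VG A Y"
    using assms(1) XY by (simp only: gcut_eq_sum_indicator sum.distrib[symmetric] distrib_left)
  finally show "gcut VG A (X \<union> Y) + gcut VG A (X \<inter> Y) \<le> gcut VG A X + gcut VG A Y" .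
qed

text \<open>The only nonzero summands sit at \<open>t = a\<close> and \<open>t = b\<close>.\<close>
lemma sum_threshold_jumps:
  fixes Y :: "real set"
  assumes "finite Y" "a \<in> Y" "b \<in> Y"
  shows "(\<Sum>t\<in>Y. t * ((if b < t \<and> t \<le> a then 1 else 0) - (if b \<le> t \<and> t < a then 1 else 0)))
       = max (a - b) 0"
proof -
  have "(\<Sum>t\<in>Y. t * ((if b < t \<and> t \<le> a then 1 else 0) - (if b \<le> t \<and> t < a then 1 else 0)))
     = (\<Sum>t\<in>Y. if b < t \<and> t \<le> a then t else 0) - (\<Sum>t\<in>Y. if b \<le> t \<and> t < a then t else 0)"
    by (simp add: sum_subtractf[symmetric] algebra_simps) (rule sum.cong, auto)
  also have "\<dots> = \<Sum>{t\<in>Y. b < t \<and> t \<le> a} - \<Sum>{t\<in>Y. b \<le> t \<and> t < a}"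
    using assms(1) by (simp add: sum.inter_filter)
  also have "\<dots> = max (a - b) 0"
  proof (cases "b < a")
    case True
    let ?I = "{t\<in>Y. b < t \<and> t < a}"
    have "{t\<in>Y. b < t \<and> t \<le> a} = insert a ?I" "{t\<in>Y. b \<le> t \<and> t < a} = insert b ?I"
      using True assms by auto
    moreover have "finite ?I" using assms(1) by simp
    ultimately show ?thesis using True by simp
  next
    case False
    hence "{t\<in>Y. b < t \<and> t \<le> a} = {}" "{t\<in>Y. b \<le> t \<and> t < a} = {}" by auto
    thus ?thesis using False by (simp del: Collect_empty_eq)
  qed
  finally show ?thesis .
qed

lemma gQ1_eq_lovasz_levels:
  assumes "finite VG"
  shows "gQ1 VG A y = lovasz_levels VG (gcut VG A) y"
proof -
  let ?Y = "y ` VG"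
  let ?jump = "\<lambda>t u v. t * ((if y v < t \<and> t \<le> y u then 1 else 0) - (if y v \<le> t \<and> t < y u then 1 else 0))"
  let ?ind = "\<lambda>S u v. if u \<in> S \<and> v \<notin> S then 1 else (0::real)"
  have "lovasz_levels VG (gcut VG A) y = (\<Sum>t\<in>?Y. t * (
      (\<Sum>u\<in>VG. \<Sum>v\<in>VG. A u v * ?ind {u\<in>VG. t \<le> y u} u v) -
      (\<Sum>u\<in>VG. \<Sum>v\<in>VG. A u v * ?ind {u\<in>VG. t < y u} u v)))"
    unfolding lovasz_levels_def using assms by (simp add: gcut_eq_sum_indicator)
  also have "\<dots> = (\<Sum>t\<in>?Y. \<Sum>u\<in>VG. \<Sum>v\<in>VG. A u v * ?jump t u v)"
    by (intro sum.cong refl)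
      (simp add: sum_subtractf[symmetric] sum_distrib_left algebra_simps not_le not_less conj_commute)
  also have "\<dots> = (\<Sum>u\<in>VG. \<Sum>v\<in>VG. A u v * (\<Sum>t\<in>?Y. ?jump t u v))"
    by (subst sum.swap) (simp add: sum.swap[of _ ?Y] sum_distrib_left)
  also have "\<dots> = gQ1 VG A y"
    unfolding gQ1_def using assms by (intro sum.cong refl) (simp add: sum_threshold_jumps)
  finally show ?thesis ..
qed

lemma gQ1_nonneg:
  assumes "\<forall>u\<in>VG. \<forall>v\<in>VG. A u v \<ge> 0"
  shows "gQ1 VG A y \<ge> 0"
  unfolding gQ1_def using assms by (intro sum_nonneg) auto

lemma hypergraph_edge:
  assumes "submodular_hypergraph N E mu w" "e \<in> E"
  shows "e \<subseteq> {..<N}" "w e {} = 0" "w e e = 0"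
proof -
  from assms have "e \<subseteq> {..<N}" "w e (e - e) = w e e" "w e {} = 0"
    unfolding submodular_hypergraph_def by (metis order_refl)+
  thus "e \<subseteq> {..<N}" "w e {} = 0" "w e e = 0" by simp_all
qed

lemma hcut_empty:
  assumes "submodular_hypergraph N E mu w"
  shows "hcut E w {} = 0"
  unfolding hcut_def using hypergraph_edge(2)[OF assms] by simp

lemma hcut_all:
  assumes "submodular_hypergraph N E mu w"
  shows "hcut E w {..<N} = 0"
  unfolding hcut_def using hypergraph_edge[OF assms] by (simp add: Int_absorb1)

section \<open>Least optimal auxiliary sets\<close>

definition min_extension :: "(nat set \<Rightarrow> real) \<Rightarrow> nat set \<Rightarrow> nat set \<Rightarrow> nat set \<Rightarrow> bool" where
  "min_extension G B S T \<longleftrightarrow> T \<subseteq> B \<and> (\<forall>T'\<subseteq>B. G (S \<union> T) \<le> G (S \<union> T'))"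

lemma min_extension_exists:
  assumes "finite B"
  shows "\<exists>T. min_extension G B S T"
proof -
  obtain T where "is_arg_min (\<lambda>T. G (S \<union> T)) (\<lambda>T. T \<in> Pow B) T"
    using ex_is_arg_min_if_finite[of "Pow B"] assms by blast
  thus ?thesis unfolding is_arg_min_linorder min_extension_def by auto
qed

lemma Min_eq_min_extension:
  assumes "finite B" "min_extension G B S T"
  shows "Min ((\<lambda>T. G (S \<union> T)) ` Pow B) = G (S \<union> T)"
  using assms by (intro Min_eqI) (auto simp: min_extension_def)

lemma min_extension_Int:
  assumes submod: "submodular_on (V \<union> B) G" and disj: "V \<inter> B = {}"
    and S: "S1 \<subseteq> S2" "S2 \<subseteq> V"
    and T1: "min_extension G B S1 T1" and T2: "min_extension G B S2 T2"
  shows "min_extension G B S1 (T1 \<inter> T2)"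
proof -
  have sub: "T1 \<subseteq> B" "T2 \<subseteq> B" using T1 T2 by (auto simp: min_extension_def)
  have un: "(S1 \<union> T1) \<union> (S2 \<union> T2) = S2 \<union> (T1 \<union> T2)" using S by auto
  have int: "(S1 \<union> T1) \<inter> (S2 \<union> T2) = S1 \<union> (T1 \<inter> T2)" using S sub disj by auto
  have "S1 \<union> T1 \<subseteq> V \<union> B" "S2 \<union> T2 \<subseteq> V \<union> B" using S sub by blast+
  from submod[unfolded submodular_on_def, rule_format, OF this]
  have "G (S2 \<union> (T1 \<union> T2)) + G (S1 \<union> (T1 \<inter> T2)) \<le> G (S1 \<union> T1) + G (S2 \<union> T2)"
    by (simp only: un int)
  moreover have "G (S2 \<union> T2) \<le> G (S2 \<union> (T1 \<union> T2))"
    using T2 sub unfolding min_extension_def by simp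
  ultimately have "G (S1 \<union> (T1 \<inter> T2)) \<le> G (S1 \<union> T1)" by linarith
  moreover have "G (S1 \<union> T1) \<le> G (S1 \<union> T')" if "T' \<subseteq> B" for T'
    using T1 that unfolding min_extension_def by simp
  ultimately show ?thesis using sub unfolding min_extension_def by (meson le_infI1 order_trans)
qed

definition least_min_extension :: "(nat set \<Rightarrow> real) \<Rightarrow> nat set \<Rightarrow> nat set \<Rightarrow> nat set" where
  "least_min_extension G B S = \<Inter>{T. min_extension G B S T}"

lemma least_min_extension:
  assumes "submodular_on (V \<union> B) G" "V \<inter> B = {}" "finite B" "S \<subseteq> V"
  shows "min_extension G B S (least_min_extension G B S)"
proof -
  obtain T1 where "min_extension G B S T1" using min_extension_exists[OF assms(3)] by blast
  then obtain T0 where T0: "min_extension G B S T0"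
    and card_min: "\<And>T. min_extension G B S T \<Longrightarrow> card T0 \<le> card T"
    using ex_has_least_nat[of "min_extension G B S" T1 card] by blast
  have "finite T0" using T0 assms(3) finite_subset by (auto simp: min_extension_def)
  have "T0 \<subseteq> T" if "min_extension G B S T" for T
  proof -
    have "min_extension G B S (T0 \<inter> T)" using min_extension_Int[OF assms(1,2) order.refl assms(4) T0 that] .
    hence "card T0 \<le> card (T0 \<inter> T)" by (rule card_min)
    hence "T0 \<inter> T = T0" using \<open>finite T0\<close> by (meson Int_lower1 card_seteq)
    thus ?thesis by blast
  qed
  hence "least_min_extension G B S = T0" unfolding least_min_extension_def using T0 by blast
  thus ?thesis using T0 by simp
qed

lemma least_min_extension_mono:
  assumes "submodular_on (V \<union> B) G" "V \<inter> B = {}" "finite B" "S1 \<subseteq> S2" "S2 \<subseteq> V"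
  shows "least_min_extension G B S1 \<subseteq> least_min_extension G B S2"
proof -
  have "min_extension G B S1 (least_min_extension G B S1 \<inter> least_min_extension G B S2)"
    using assms by (intro min_extension_Int[OF assms(1,2,4,5)] least_min_extension[OF assms(1-3)]) auto
  hence "least_min_extension G B S1 \<subseteq> least_min_extension G B S1 \<inter> least_min_extension G B S2"
    unfolding least_min_extension_def by blast
  thus ?thesis by blast
qed

lemma level_sets_Max_layer:
  fixes L :: "real \<Rightarrow> 'a set"
  assumes X: "finite X" "r \<in> X" and top: "L r = B"
    and sub: "\<And>t. t \<in> X \<Longrightarrow> L t \<subseteq> B"
    and antimono: "\<And>t t'. t \<in> X \<Longrightarrow> t' \<in> X \<Longrightarrow> t \<le> t' \<Longrightarrow> L t' \<subseteq> L t"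
  defines "z \<equiv> \<lambda>b. Max {t\<in>X. b \<in> L t}"
  shows "\<And>b. b \<in> B \<Longrightarrow> z b \<in> X" and "\<And>t. t \<in> X \<Longrightarrow> {b\<in>B. t \<le> z b} = L t"
proof -
  have fin: "finite {t\<in>X. b \<in> L t}" for b using X(1) by simp
  have ne: "{t\<in>X. b \<in> L t} \<noteq> {}" if "b \<in> B" for b using X(2) top that by blast
  show "z b \<in> X" if "b \<in> B" for b
    using Max_in[OF fin ne[OF that]] by (simp add: z_def)
  show "{b\<in>B. t \<le> z b} = L t" if t: "t \<in> X" for t
  proof (intro set_eqI iffI)
    fix b assume "b \<in> {b\<in>B. t \<le> z b}"
    then obtain t' where "t' \<in> X" "b \<in> L t'" "t \<le> t'"
      using Max_ge_iff[OF fin ne] by (auto simp: z_def)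
    thus "b \<in> L t" using antimono[OF t] by blast
  next
    fix b assume "b \<in> L t"
    thus "b \<in> {b\<in>B. t \<le> z b}" using sub[OF t] t Max_ge[OF fin] by (auto simp: z_def)
  qed
qed

section \<open>From cut reduction to Lovasz reduction\<close>

lemma lovasz_levels_le_gQ1:
  assumes reduction: "\<forall>S\<subseteq>{..<N}. F S = Min ((\<lambda>T. gcut {..<N + M} A (S \<union> T)) ` Pow {N..<N + M})"
    and F_empty: "F {} = 0" and F_all: "F {..<N} = 0"
  shows "lovasz_levels {..<N} F y \<le> gQ1 {..<N + M} A y"
proof -
  let ?V = "{..<N}" and ?B = "{N..<N + M}" and ?VG = "{..<N + M}"
  have cut_bound: "F (C \<inter> ?V) \<le> gcut ?VG A C" if "C \<subseteq> ?VG" for C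
  proof -
    have "C = (C \<inter> ?V) \<union> (C \<inter> ?B)" using that by auto
    moreover have "F (C \<inter> ?V) \<le> gcut ?VG A ((C \<inter> ?V) \<union> (C \<inter> ?B))"
      using reduction by (simp add: Min_le)
    ultimately show ?thesis by simp
  qed
  have "lovasz_levels ?V F y = lovasz_levels ?VG (\<lambda>C. F (C \<inter> ?V)) y"
    by (rule lovasz_levels_restrict[symmetric]) auto
  also have "\<dots> \<le> lovasz_levels ?VG (gcut ?VG A) y"
    using cut_bound F_empty F_all gcut_empty gcut_all
    by (intro lovasz_levels_mono) (auto simp: Int_absorb1)
  also have "\<dots> = gQ1 ?VG A y"
    by (rule gQ1_eq_lovasz_levels[symmetric]) simp
  finally show ?thesis .
qed

lemma nested_optimal_extensions:
  assumes reduction: "\<forall>S\<subseteq>{..<N}. F S = Min ((\<lambda>T. gcut {..<N + M} A (S \<union> T)) ` Pow {N..<N + M})"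
    and A_nonneg: "\<forall>u\<in>{..<N + M}. \<forall>v\<in>{..<N + M}. A u v \<ge> 0" and F_all: "F {..<N} = 0"
  obtains L where "L (Min (x ` {..<N})) = {N..<N + M}"
    and "\<And>t. t \<in> x ` {..<N} \<Longrightarrow> L t \<subseteq> {N..<N + M}"
    and "\<And>t t'. t \<in> x ` {..<N} \<Longrightarrow> t' \<in> x ` {..<N} \<Longrightarrow> t \<le> t' \<Longrightarrow> L t' \<subseteq> L t"
    and "\<And>t. t \<in> x ` {..<N} \<Longrightarrow>
           gcut {..<N + M} A ({v\<in>{..<N}. t \<le> x v} \<union> L t) = F {v\<in>{..<N}. t \<le> x v}"
proof -
  let ?V = "{..<N}" and ?B = "{N..<N + M}" and ?VG = "{..<N + M}"
  let ?G = "gcut ?VG A" and ?X = "x ` {..<N}"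
  have VG: "?VG = ?V \<union> ?B" "?V \<inter> ?B = {}" by auto
  have submod: "submodular_on (?V \<union> ?B) ?G"
    using gcut_submodular[of ?VG A] A_nonneg by (simp add: VG(1)[symmetric])
  define mn where "mn = Min ?X"
  have mn_le: "mn \<le> t" if "t \<in> ?X" for t using that by (simp add: mn_def)
  define St where "St t = {v\<in>?V. t \<le> x v}" for t
  have St_sub: "St t \<subseteq> ?V" for t by (auto simp: St_def)
  have St_mn: "St mn = ?V" using mn_le by (auto simp: St_def)
  define L where "L t = (if t = mn then ?B else least_min_extension ?G ?B (St t))" for t
  have L_sub: "L t \<subseteq> ?B" for t
    using least_min_extension[OF submod VG(2) _ St_sub] by (simp add: L_def min_extension_def)
  have L_antimono: "L t' \<subseteq> L t" if "t \<in> ?X" "t' \<in> ?X" "t \<le> t'" for t t'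
  proof (cases "t = mn")
    case True
    thus ?thesis using L_sub[of t'] by (simp add: L_def)
  next
    case False
    hence "t' \<noteq> mn" using that mn_le by force
    moreover have "St t' \<subseteq> St t" using that(3) by (auto simp: St_def)
    ultimately show ?thesis using False least_min_extension_mono[OF submod VG(2) _ _ St_sub]
      by (simp add: L_def)
  qed
  have "?G (St t \<union> L t) = F (St t)" for t
  proof (cases "t = mn")
    case True
    thus ?thesis using St_mn F_all gcut_all[of ?VG A] by (simp add: L_def VG(1)[symmetric])
  next
    case False
    have "min_extension ?G ?B (St t) (L t)"
      using False least_min_extension[OF submod VG(2) _ St_sub] by (simp add: L_def)
    hence "Min ((\<lambda>T. ?G (St t \<union> T)) ` Pow ?B) = ?G (St t \<union> L t)"
      by (intro Min_eq_min_extension) simp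
    thus ?thesis using reduction St_sub by simp
  qed
  moreover have "L (Min ?X) = ?B" by (simp add: L_def mn_def)
  ultimately show ?thesis using that L_sub L_antimono by (simp add: St_def)
qed

text \<open>Each auxiliary vertex gets the highest level of \<open>x\<close> whose optimal extension contains it.\<close>
lemma gQ1_extension_eq_lovasz_levels:
  assumes reduction: "\<forall>S\<subseteq>{..<N}. F S = Min ((\<lambda>T. gcut {..<N + M} A (S \<union> T)) ` Pow {N..<N + M})"
    and A_nonneg: "\<forall>u\<in>{..<N + M}. \<forall>v\<in>{..<N + M}. A u v \<ge> 0"
    and F_empty: "F {} = 0" and F_all: "F {..<N} = 0" and "N > 0"
  shows "\<exists>xb. gQ1 {..<N + M} A (\<lambda>i. if i < N then x i else xb i) = lovasz_levels {..<N} F x"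
proof -
  let ?V = "{..<N}" and ?B = "{N..<N + M}" and ?VG = "{..<N + M}"
  let ?G = "gcut ?VG A"
  define X where "X = x ` ?V"
  have X: "finite X" "Min X \<in> X" using \<open>N > 0\<close> unfolding X_def by (auto intro!: Min_in)
  obtain L where L_top: "L (Min X) = ?B" and L_sub: "\<And>t. t \<in> X \<Longrightarrow> L t \<subseteq> ?B"
    and L_antimono: "\<And>t t'. t \<in> X \<Longrightarrow> t' \<in> X \<Longrightarrow> t \<le> t' \<Longrightarrow> L t' \<subseteq> L t"
    and cut_levels: "\<And>t. t \<in> X \<Longrightarrow> ?G ({v\<in>?V. t \<le> x v} \<union> L t) = F {v\<in>?V. t \<le> x v}"
    using nested_optimal_extensions[OF reduction A_nonneg F_all] unfolding X_def by blast
  define xb where "xb b = Max {t\<in>X. b \<in> L t}" for b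
  define y where "y i = (if i < N then x i else xb i)" for i
  have xb_values: "xb b \<in> X" if "b \<in> ?B" for b
    unfolding xb_def
    by (rule level_sets_Max_layer(1)[where L = L and r = "Min X", OF X L_top L_sub L_antimono that])
  have xb_levels: "{b\<in>?B. t \<le> xb b} = L t" if "t \<in> X" for t
    unfolding xb_def
    by (rule level_sets_Max_layer(2)[where L = L and r = "Min X", OF X L_top L_sub L_antimono that])
  have y_values: "y u \<in> X" if "u \<in> ?VG" for u
    using xb_values[of u] that by (cases "u < N") (simp_all add: y_def X_def)
  have y_levels: "{u\<in>?VG. t \<le> y u} = {v\<in>?V. t \<le> x v} \<union> L t" if "t \<in> X" for t
  proof -
    have "{u\<in>?VG. t \<le> y u} = {v\<in>?V. t \<le> y v} \<union> {b\<in>?B. t \<le> y b}" by auto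
    also have "{v\<in>?V. t \<le> y v} = {v\<in>?V. t \<le> x v}" by (auto simp: y_def)
    also have "{b\<in>?B. t \<le> y b} = {b\<in>?B. t \<le> xb b}" by (auto simp: y_def)
    finally show ?thesis using xb_levels[OF that] by simp
  qed
  have "lovasz_levels ?VG ?G y = lovasz_levels ?V F x"
  proof (rule lovasz_levels_eqI[OF X(1)])
    show "y ` ?VG \<subseteq> X" using y_values by blast
    show "x ` ?V \<subseteq> X" by (simp add: X_def)
    show "?G {} = F {}" using F_empty by (simp add: gcut_empty)
    show "?G {u\<in>?VG. t \<le> y u} = F {v\<in>?V. t \<le> x v}" if "t \<in> X" for t
      using y_levels[OF that] cut_levels[OF that] by simp
  qed
  moreover have "gQ1 ?VG A y = lovasz_levels ?VG ?G y" by (rule gQ1_eq_lovasz_levels) simp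
  moreover have "y = (\<lambda>i. if i < N then x i else xb i)" by (simp add: y_def fun_eq_iff)
  ultimately show ?thesis by auto
qed

section \<open>From Lovasz reduction to cut reduction\<close>

lemma sorting_perm_separating_segment:
  assumes sp: "sorting_perm K y \<tau>" and V: "V \<subseteq> {..<K}" "S \<subseteq> V" "S \<noteq> {}" "V - S \<noteq> {}"
    and y: "\<And>v. v \<in> V \<Longrightarrow> y v = (if v \<in> S then 1 else 0)"
  obtains a b where "a < b" "b < K" "y (\<tau> a) = 1" "y (\<tau> b) = 0"
    "\<And>j. a \<le> j \<Longrightarrow> j < b \<Longrightarrow> \<tau> ` {..j} \<inter> V = S"
proof -
  have img: "\<tau> ` {..<K} = {..<K}" and srt: "\<forall>i j. i < j \<and> j < K \<longrightarrow> y (\<tau> j) \<le> y (\<tau> i)"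
    using sp unfolding sorting_perm_def bij_betw_def by auto
  define P1 where "P1 = {j. j < K \<and> \<tau> j \<in> S}"
  define P0 where "P0 = {j. j < K \<and> \<tau> j \<in> V - S}"
  have fin: "finite P1" "finite P0" by (auto simp: P1_def P0_def)
  have "P1 \<noteq> {}"
  proof -
    obtain s where "s \<in> S" using V(3) by blast
    moreover from this obtain i where "i < K" "s = \<tau> i" using img V(1,2) by blast
    ultimately show ?thesis by (auto simp: P1_def)
  qed
  have "P0 \<noteq> {}"
  proof -
    obtain s where "s \<in> V - S" using V(4) by blast
    moreover from this obtain i where "i < K" "s = \<tau> i" using img V(1) by blast
    ultimately show ?thesis by (auto simp: P0_def)
  qed
  define a where "a = Max P1"
  define b where "b = Min P0"
  have aP: "a \<in> P1" and a_max: "\<And>j. j \<in> P1 \<Longrightarrow> j \<le> a"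
    using fin \<open>P1 \<noteq> {}\<close> by (simp_all add: a_def)
  have bP: "b \<in> P0" and b_min: "\<And>j. j \<in> P0 \<Longrightarrow> b \<le> j"
    using fin \<open>P0 \<noteq> {}\<close> by (simp_all add: b_def)
  have ya: "y (\<tau> a) = 1" using aP V y by (auto simp: P1_def)
  have yb: "y (\<tau> b) = 0" using bP y by (auto simp: P0_def)
  have "b < K" using bP by (simp add: P0_def)
  have "a < b"
  proof (rule ccontr)
    assume "\<not> a < b"
    moreover have "b \<noteq> a" using aP bP by (auto simp: P1_def P0_def)
    ultimately have "b < a" by simp
    hence "y (\<tau> a) \<le> y (\<tau> b)" using srt aP by (auto simp: P1_def)
    thus False using ya yb by simp
  qed
  moreover have "\<tau> ` {..j} \<inter> V = S" if j: "a \<le> j" "j < b" for j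
  proof (intro set_eqI iffI)
    fix u assume u: "u \<in> \<tau> ` {..j} \<inter> V"
    then obtain i where i: "i \<le> j" "u = \<tau> i" by auto
    show "u \<in> S"
    proof (rule ccontr)
      assume "u \<notin> S"
      hence "i \<in> P0" using u i j \<open>b < K\<close> by (auto simp: P0_def)
      thus False using b_min[of i] i j by simp
    qed
  next
    fix u assume u: "u \<in> S"
    then obtain i where i: "i < K" "u = \<tau> i" using img V by blast
    hence "i \<in> P1" using u by (simp add: P1_def)
    hence "i \<le> j" using a_max[of i] j by simp
    thus "u \<in> \<tau> ` {..j} \<inter> V" using i u V by auto
  qed
  ultimately show ?thesis using \<open>b < K\<close> ya yb by (intro that)
qed

lemma ex_le_convex_combination:
  fixes f d :: "'a \<Rightarrow> real"
  assumes "finite J" "J \<noteq> {}" "\<And>j. j \<in> J \<Longrightarrow> d j \<ge> 0" "sum d J = 1"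
  obtains j where "j \<in> J" "f j \<le> (\<Sum>j\<in>J. f j * d j)"
proof -
  obtain j0 where j0: "j0 \<in> J" "\<And>j. j \<in> J \<Longrightarrow> f j0 \<le> f j"
    using ex_is_arg_min_if_finite[OF assms(1,2), of f] unfolding is_arg_min_linorder by blast
  have "f j0 = (\<Sum>j\<in>J. f j0 * d j)" using assms(4) by (simp add: sum_distrib_left[symmetric])
  also have "\<dots> \<le> (\<Sum>j\<in>J. f j * d j)"
    using j0(2) assms(3) by (intro sum_mono mult_right_mono) auto
  finally show ?thesis using that j0(1) by blast
qed

text \<open>The chain form of \<open>gQ1 y\<close> is a nonnegative combination of cuts of prefixes in which the
  prefixes between the last vertex of \<open>S\<close> and the first vertex of \<open>V - S\<close> carry total
  weight \<open>1 - 0\<close>.\<close>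
lemma gQ1_ge_cut_of_indicator_extension:
  assumes A_nonneg: "\<forall>u\<in>{..<N + M}. \<forall>v\<in>{..<N + M}. A u v \<ge> 0" and S: "S \<subseteq> {..<N}"
    and y: "\<And>v. v < N \<Longrightarrow> y v = (if v \<in> S then 1 else 0)"
  shows "\<exists>T\<subseteq>{N..<N + M}. gcut {..<N + M} A (S \<union> T) \<le> gQ1 {..<N + M} A y"
proof -
  let ?V = "{..<N}" and ?B = "{N..<N + M}" and ?VG = "{..<N + M}" and ?K = "N + M"
  let ?G = "gcut ?VG A"
  consider "S = {}" | "S = ?V" | "S \<noteq> {}" "?V - S \<noteq> {}" using S by blast
  thus ?thesis
  proof cases
    case 1
    hence "?G (S \<union> {}) = 0" by (simp add: gcut_empty)
    thus ?thesis using gQ1_nonneg[OF A_nonneg, of y] by (intro exI[of _ "{}"]) simp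
  next
    case 2
    hence "?G (S \<union> ?B) = 0" using gcut_all[of ?VG A] by (simp add: ivl_disj_un_one(2))
    thus ?thesis using gQ1_nonneg[OF A_nonneg, of y] by (intro exI[of _ ?B]) simp
  next
    case 3
    obtain \<tau> where sp: "sorting_perm ?K y \<tau>" using sorting_perm_exists by blast
    hence bij: "bij_betw \<tau> ?VG ?VG" and srt: "\<forall>i j. i < j \<and> j < ?K \<longrightarrow> y (\<tau> j) \<le> y (\<tau> i)"
      unfolding sorting_perm_def by auto
    obtain a b where ab: "a < b" "b < ?K" "y (\<tau> a) = 1" "y (\<tau> b) = 0"
      and segment: "\<And>j. a \<le> j \<Longrightarrow> j < b \<Longrightarrow> \<tau> ` {..j} \<inter> ?V = S"
      using sorting_perm_separating_segment[OF sp _ S 3] y by auto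
    let ?d = "\<lambda>j. y (\<tau> j) - y (\<tau> (Suc j))"
    have d_nonneg: "?d j \<ge> 0" if "j < ?K - 1" for j using srt that by auto
    have G_nonneg: "?G (\<tau> ` {..j}) \<ge> 0" if "j < ?K" for j
      using bij that A_nonneg by (intro gcut_nonneg) (auto simp: bij_betw_def)
    have "(\<Sum>j\<in>{a..<b}. (- y (\<tau> (Suc j))) - (- y (\<tau> j))) = (- y (\<tau> b)) - (- y (\<tau> a))"
      using ab(1) by (intro sum_Suc_diff') simp
    hence weights_sum: "sum ?d {a..<b} = 1" using ab(3,4) by simp
    have weights_nonneg: "?d j \<ge> 0" if "j \<in> {a..<b}" for j
      using ab(2) that by (intro d_nonneg) auto
    have "{a..<b} \<noteq> {}" using ab(1) by simp
    then obtain j0 where j0: "j0 \<in> {a..<b}"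
      and j0_le: "?G (\<tau> ` {..j0}) \<le> (\<Sum>j\<in>{a..<b}. ?G (\<tau> ` {..j}) * ?d j)"
      by (rule ex_le_convex_combination[where f = "\<lambda>j. ?G (\<tau> ` {..j})",
            OF finite_atLeastLessThan _ weights_nonneg weights_sum])
    note j0_le
    also have "\<dots> \<le> (\<Sum>j<?K - 1. ?G (\<tau> ` {..j}) * ?d j)"
      using ab(2) G_nonneg d_nonneg by (intro sum_mono2) auto
    also have "\<dots> = lovasz_chain ?K ?VG ?G y \<tau>"
      unfolding lovasz_chain_def using gcut_all[of ?VG A] by simp
    also have "\<dots> = gQ1 ?VG A y"
      using gQ1_eq_lovasz_levels[of ?VG A y] lovasz_chain_eq_levels[where F = ?G, OF bij srt gcut_empty] by simp
    finally have le: "?G (\<tau> ` {..j0}) \<le> gQ1 ?VG A y" .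
    have "\<tau> ` {..j0} \<subseteq> ?VG" using bij j0 ab(2) by (auto simp: bij_betw_def)
    hence "\<tau> ` {..j0} = (\<tau> ` {..j0} \<inter> ?V) \<union> (\<tau> ` {..j0} \<inter> ?B)" by auto
    hence "\<tau> ` {..j0} = S \<union> (\<tau> ` {..j0} \<inter> ?B)" using segment j0 by simp
    thus ?thesis using le by (intro exI[of _ "\<tau> ` {..j0} \<inter> ?B"]) auto
  qed
qed

lemma gQ1_indicator:
  assumes "finite VG" "C \<subseteq> VG"
  shows "gQ1 VG A (\<lambda>i. if i \<in> C then 1 else 0) = gcut VG A C"
  using assms gcut_empty by (simp add: gQ1_eq_lovasz_levels lovasz_levels_indicator)

lemma cut_reduction_imp_lovasz_reduction:
  assumes reduction: "\<forall>S\<subseteq>{..<N}. F S = Min ((\<lambda>T. gcut {..<N + M} A (S \<union> T)) ` Pow {N..<N + M})"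
    and A_nonneg: "\<forall>u\<in>{..<N + M}. \<forall>v\<in>{..<N + M}. A u v \<ge> 0"
    and F_empty: "F {} = 0" and F_all: "F {..<N} = 0"
  shows "\<exists>xb. lovasz_ext N F x = gQ1 {..<N + M} A (\<lambda>i. if i < N then x i else xb i) \<and>
           (\<forall>xb'. gQ1 {..<N + M} A (\<lambda>i. if i < N then x i else xb i)
                   \<le> gQ1 {..<N + M} A (\<lambda>i. if i < N then x i else xb' i))"
proof -
  have levels: "lovasz_ext N F x = lovasz_levels {..<N} F x"
    using F_empty by (rule lovasz_ext_eq_levels)
  have lower: "lovasz_ext N F x \<le> gQ1 {..<N + M} A (\<lambda>i. if i < N then x i else xb' i)" for xb'
  proof -
    have "lovasz_levels {..<N} F x = lovasz_levels {..<N} F (\<lambda>i. if i < N then x i else xb' i)"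
      by (rule lovasz_levels_cong) simp
    thus ?thesis using levels lovasz_levels_le_gQ1[OF reduction F_empty F_all] by simp
  qed
  obtain xb where "gQ1 {..<N + M} A (\<lambda>i. if i < N then x i else xb i) = lovasz_ext N F x"
  proof (cases "N = 0")
    case True
    hence "gQ1 {..<N + M} A (\<lambda>i. if i < N then x i else 0) = lovasz_ext N F x"
      using levels by (simp add: gQ1_def lovasz_levels_def)
    thus ?thesis by (rule that)
  next
    case False
    thus ?thesis using gQ1_extension_eq_lovasz_levels[OF reduction A_nonneg F_empty F_all] levels that
      by auto
  qed
  thus ?thesis using lower by (intro exI[of _ xb]) simp
qed

lemma lovasz_reduction_imp_cut_reduction:
  assumes A_nonneg: "\<forall>u\<in>{..<N + M}. \<forall>v\<in>{..<N + M}. A u v \<ge> 0" and F_empty: "F {} = 0"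
    and lovasz: "\<forall>x. \<exists>xb. lovasz_ext N F x = gQ1 {..<N + M} A (\<lambda>i. if i < N then x i else xb i) \<and>
           (\<forall>xb'. gQ1 {..<N + M} A (\<lambda>i. if i < N then x i else xb i)
                   \<le> gQ1 {..<N + M} A (\<lambda>i. if i < N then x i else xb' i))"
    and S: "S \<subseteq> {..<N}"
  shows "F S = Min ((\<lambda>T. gcut {..<N + M} A (S \<union> T)) ` Pow {N..<N + M})"
proof -
  let ?B = "{N..<N + M}" and ?VG = "{..<N + M}"
  define x where "x i = (if i \<in> S then 1 else (0::real))" for i
  obtain xb where xb: "lovasz_ext N F x = gQ1 ?VG A (\<lambda>i. if i < N then x i else xb i)"
    and xb_min: "\<And>xb'. gQ1 ?VG A (\<lambda>i. if i < N then x i else xb i)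
                        \<le> gQ1 ?VG A (\<lambda>i. if i < N then x i else xb' i)"
    using lovasz by blast
  have "lovasz_ext N F x = F S"
    using S F_empty by (simp add: lovasz_ext_eq_levels lovasz_levels_indicator x_def[abs_def])
  hence F_S: "F S = gQ1 ?VG A (\<lambda>i. if i < N then x i else xb i)" using xb by simp
  have lower: "F S \<le> gcut ?VG A (S \<union> T)" if T: "T \<subseteq> ?B" for T
  proof -
    have indicator: "(\<lambda>i. if i < N then x i else if i \<in> T then 1 else 0)
        = (\<lambda>i. if i \<in> S \<union> T then 1 else 0)"
      using S T by (auto simp: x_def fun_eq_iff)
    have "gQ1 ?VG A (\<lambda>i. if i < N then x i else if i \<in> T then 1 else 0) = gcut ?VG A (S \<union> T)"
      unfolding indicator using S T by (intro gQ1_indicator) auto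
    thus ?thesis using xb_min[of "\<lambda>i. if i \<in> T then 1 else 0"] F_S by simp
  qed
  obtain T where T: "T \<subseteq> ?B" "gcut ?VG A (S \<union> T) \<le> F S"
    using gQ1_ge_cut_of_indicator_extension[OF A_nonneg S, of "\<lambda>i. if i < N then x i else xb i"] F_S
    by (auto simp: x_def)
  hence "gcut ?VG A (S \<union> T) = F S" using lower by (simp add: order_antisym)
  hence "F S \<in> (\<lambda>T. gcut ?VG A (S \<union> T)) ` Pow ?B" using T(1) by (metis PowI image_eqI)
  thus ?thesis using lower by (intro Min_eqI[symmetric]) auto
qed

theorem theorem1:
  fixes N M :: nat
    and E :: "nat set set" and mu :: "nat \<Rightarrow> real" and w :: "nat set \<Rightarrow> nat set \<Rightarrow> real"
    and A :: "nat \<Rightarrow> nat \<Rightarrow> real"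
  assumes H: "submodular_hypergraph N E mu w"
    and A_nonneg: "\<forall>u<N + M. \<forall>v<N + M. A u v \<ge> 0"
  shows "(\<forall>S\<subseteq>{..<N}. hcut E w S =
            Min ((\<lambda>T. gcut {..<N + M} A (S \<union> T)) ` Pow {N..<N + M}))
     \<longleftrightarrow>
     (\<forall>x :: nat \<Rightarrow> real.
        \<exists>xb :: nat \<Rightarrow> real.
          hQ1 N E w x = gQ1 {..<N + M} A (\<lambda>i. if i < N then x i else xb i) \<and>
          (\<forall>xb' :: nat \<Rightarrow> real.
             gQ1 {..<N + M} A (\<lambda>i. if i < N then x i else xb i)
               \<le> gQ1 {..<N + M} A (\<lambda>i. if i < N then x i else xb' i)))"
proof -
  have A_nonneg': "\<forall>u\<in>{..<N + M}. \<forall>v\<in>{..<N + M}. A u v \<ge> 0" using A_nonneg by simp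
  note F_empty = hcut_empty[OF H] and F_all = hcut_all[OF H]
  show ?thesis
    unfolding hQ1_def
  proof (intro iffI allI impI)
    fix x :: "nat \<Rightarrow> real"
    assume "\<forall>S\<subseteq>{..<N}. hcut E w S = Min ((\<lambda>T. gcut {..<N + M} A (S \<union> T)) ` Pow {N..<N + M})"
    thus "\<exists>xb. lovasz_ext N (hcut E w) x = gQ1 {..<N + M} A (\<lambda>i. if i < N then x i else xb i) \<and>
            (\<forall>xb'. gQ1 {..<N + M} A (\<lambda>i. if i < N then x i else xb i)
                    \<le> gQ1 {..<N + M} A (\<lambda>i. if i < N then x i else xb' i))"
      by (rule cut_reduction_imp_lovasz_reduction[where F = "hcut E w", OF _ A_nonneg' F_empty F_all])
  next
    fix S assume "S \<subseteq> {..<N}"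
      and "\<forall>x. \<exists>xb. lovasz_ext N (hcut E w) x = gQ1 {..<N + M} A (\<lambda>i. if i < N then x i else xb i) \<and>
            (\<forall>xb'. gQ1 {..<N + M} A (\<lambda>i. if i < N then x i else xb i)
                    \<le> gQ1 {..<N + M} A (\<lambda>i. if i < N then x i else xb' i))"
    thus "hcut E w S = Min ((\<lambda>T. gcut {..<N + M} A (S \<union> T)) ` Pow {N..<N + M})"
      by (intro lovasz_reduction_imp_cut_reduction[where F = "hcut E w", OF A_nonneg' F_empty])
  qed
qed

end
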